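(* For every $n\ge1$, the map sending a nonempty finite sequence $(P_1,\dots,P_j)$ of indecomposable Dyck paths, taken up to cyclic rotation of the sequence, to the necklace of the word $P_1P_2\cdots P_j$ (each path written as a word in $\nearrow,\searrow$, i.e. in $\circ,\bullet$) is a bijection between cyclic sequences of indecomposable Dyck paths of total length $2n$ and $(1,1)$-balanced necklaces of length $2n$. Equivalently, $Cyc_{(1,1)}\simeq Cyc(\nearrow\mathcal{D}\searrow)$ as combinatorial classes (size = length). *)

theory Defs
  imports Main
begin

text \<open>Words over the alphabet {up, down}: True = up step (white, circ),
  False = down step (black, bullet).\<close>

definition height :: "bool list \<Rightarrow> int" where
  "height w = int (count_list w True) - int (count_list w False)"

definition dyck :: "bool list \<Rightarrow> bool" where
  "dyck w \<longleftrightarrow> height w = 0 \<and> (\<forall>k \<le> length w. height (take k w) \<ge> 0)"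

definition indec_dyck :: "bool list \<Rightarrow> bool" where
  "indec_dyck w \<longleftrightarrow> dyck w \<and> w \<noteq> [] \<and>
     (\<forall>k. 0 < k \<and> k < length w \<longrightarrow> height (take k w) > 0)"

definition rot_class :: "'a list \<Rightarrow> 'a list set" where
  "rot_class xs = {rotate k xs | k. True}"

definition cyc_seqs :: "nat \<Rightarrow> bool list list set set" where
  "cyc_seqs n = rot_class ` {ps. ps \<noteq> [] \<and> (\<forall>p\<in>set ps. indec_dyck p)
                                  \<and> length (concat ps) = 2 * n}"

definition balanced_necklaces :: "nat \<Rightarrow> bool list set set" where
  "balanced_necklaces n = rot_class ` {w. length w = 2 * n \<and>
                                          count_list w True = count_list w False}"

definition cyc_to_necklace :: "bool list list set \<Rightarrow> bool list set" where
  "cyc_to_necklace C = the_elem ((\<lambda>ps. rot_class (concat ps)) ` C)"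

end

theory Submission
  imports Defs
begin

(* A word over {up, down} is a Dyck word iff it factors into indecomposable Dyck
   paths, and this factorisation is unique because the factor boundaries are
   exactly the returns of the height profile to zero.  The map of the theorem
   sends the rotation class of a sequence (P_1,...,P_j) to the rotation class
   of P_1...P_j; it is well defined because rotating the sequence rotates the
   concatenation.

   Injectivity: if a concatenation of indecomposable paths is a rotation of
   another such concatenation, then both are Dyck words, so the rotation cuts
   the first word at a point of height zero, i.e. at a factor boundary; by
   unique factorisation the second sequence is then a rotation of the first.
   Surjectivity is the cycle lemma: rotating a balanced word so that it starts
   at a minimum of its height profile yields a Dyck word, which factors into
   indecomposable paths. *)

section \<open>Heights and Dyck words\<close>

lemma height_Nil [simp]: "height [] = 0"
  by (simp add: height_def)

lemma height_append: "height (xs @ ys) = height xs + height ys"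
  by (simp add: height_def)

lemma height_take_add:
  "height (take (k + j) w) = height (take k w) + height (take j (drop k w))"
  by (simp add: take_add height_append)

lemma dyck_prefix: "dyck w \<Longrightarrow> height (take k w) \<ge> 0"
  unfolding dyck_def by (cases "k \<le> length w") auto

lemma dyck_height: "dyck w \<Longrightarrow> height w = 0"
  by (simp add: dyck_def)

lemma dyck_balanced: "dyck w \<Longrightarrow> count_list w True = count_list w False"
  by (simp add: dyck_def height_def)

lemma dyck_append:
  assumes "dyck a" "dyck b"
  shows "dyck (a @ b)"
  unfolding dyck_def
proof (intro conjI allI impI)
  show "height (a @ b) = 0"
    using assms by (simp add: dyck_height height_append)
  fix k
  show "0 \<le> height (take k (a @ b))"
  proof (cases "k \<le> length a")
    case True
    then show ?thesis using dyck_prefix[OF assms(1), of k] by simp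
  next
    case False
    then show ?thesis
      using dyck_prefix[OF assms(2), of "k - length a"] dyck_height[OF assms(1)]
      by (simp add: height_append)
  qed
qed

lemma dyck_concat: "\<forall>p\<in>set ps. indec_dyck p \<Longrightarrow> dyck (concat ps)"
proof (induction ps)
  case Nil
  then show ?case by (simp add: dyck_def)
next
  case (Cons p ps)
  then show ?case by (auto simp: indec_dyck_def intro: dyck_append)
qed

lemma dyck_rotation_cut:
  assumes "dyck u" "dyck (drop m u @ take m u)"
  shows "height (take m u) = 0"
proof -
  have "height (take (length (drop m u)) (drop m u @ take m u)) \<ge> 0"
    using assms(2) dyck_prefix by blast
  then have "height (drop m u) \<ge> 0" by simp
  moreover have "height (take m u) + height (drop m u) = 0"
    using dyck_height[OF assms(1)] by (metis append_take_drop_id height_append)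
  ultimately show ?thesis using dyck_prefix[OF assms(1), of m] by linarith
qed

section \<open>Rotation classes\<close>

lemma rot_class_self: "xs \<in> rot_class xs"
  unfolding rot_class_def by (auto intro: exI[of _ 0])

lemma rot_class_rotate: "rot_class (rotate k xs) = rot_class xs"
proof (cases "xs = []")
  case True
  then show ?thesis by simp
next
  case False
  have "rotate m xs \<in> rot_class (rotate k xs)" for m
  proof -
    have "m + length xs * k - k + k = m + length xs * k"
      using False by (cases "length xs") auto
    then have "rotate (m + length xs * k - k) (rotate k xs) = rotate (m + length xs * k) xs"
      by (simp add: rotate_rotate)
    also have "\<dots> = rotate m xs"
      by (metis rotate_conv_mod mod_mult_self2 mult.commute)
    finally show ?thesis unfolding rot_class_def by (metis (mono_tags, lifting) mem_Collect_eq)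
  qed
  then show ?thesis
    by (auto simp: rot_class_def rotate_rotate)
qed

lemma concat_rotate: "\<exists>j. concat (rotate k ps) = rotate j (concat ps)"
proof (induction k)
  case 0
  show ?case by (rule exI[of _ 0]) simp
next
  case (Suc k)
  then obtain j where j: "concat (rotate k ps) = rotate j (concat ps)" by blast
  show ?case
  proof (cases "rotate k ps")
    case Nil
    then show ?thesis using j by (simp add: rotate_Suc)
  next
    case (Cons q qs)
    have "concat (rotate (Suc k) ps) = concat qs @ q"
      using Cons by (simp add: rotate_Suc)
    also have "\<dots> = rotate (length q) (q @ concat qs)"
      by (simp add: rotate_append)
    also have "q @ concat qs = rotate j (concat ps)"
      using j Cons by simp
    finally show ?thesis by (auto simp: rotate_rotate)
  qed
qed

lemma image_rot_class:
  "(\<lambda>ps. rot_class (concat ps)) ` rot_class ps = {rot_class (concat ps)}"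
proof -
  have "rot_class (concat (rotate k ps)) = rot_class (concat ps)" for k
    using concat_rotate[of k ps] rot_class_rotate by metis
  then show ?thesis
    using rot_class_self[of ps] unfolding rot_class_def[of ps] by auto
qed

lemma cyc_to_necklace_rot_class: "cyc_to_necklace (rot_class ps) = rot_class (concat ps)"
  unfolding cyc_to_necklace_def image_rot_class by simp

section \<open>Unique factorisation into indecomposable paths\<close>

text \<open>An indecomposable path cannot be a proper prefix of another one, since the
  longer path would return to height zero in its interior.\<close>
lemma indec_prefix_eq:
  assumes "indec_dyck p" "indec_dyck q" "p @ X = q @ Y"
  shows "p = q"
proof -
  have no_shorter: False
    if "indec_dyck p" "indec_dyck q" "p @ X = q @ Y" "length p < length q" for p q X Y
  proof -
    have "take (length p) q = p"
      using that(3,4) by (metis append_eq_append_conv_if take_all_iff order.strict_implies_order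
                               take_append take_take)
    moreover have "height p = 0" "length p > 0"
      using that(1) by (simp_all add: indec_dyck_def dyck_def)
    ultimately show False
      using that(2,4) unfolding indec_dyck_def by force
  qed
  have "length p = length q"
    using no_shorter[OF assms] no_shorter[OF assms(2,1) assms(3)[symmetric]]
    by (meson linorder_neqE_nat)
  then show ?thesis using assms(3) by (simp add: append_eq_append_conv)
qed

lemma unique_factorisation:
  "\<forall>p\<in>set ps. indec_dyck p \<Longrightarrow> \<forall>q\<in>set qs. indec_dyck q \<Longrightarrow> concat ps = concat qs
   \<Longrightarrow> ps = qs"
proof (induction ps arbitrary: qs)
  case Nil
  then show ?case by (cases qs) (auto simp: indec_dyck_def)
next
  case (Cons p ps)
  show ?case
  proof (cases qs)
    case Nil
    then show ?thesis using Cons.prems by (auto simp: indec_dyck_def)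
  next
    case (Cons q qs')
    have eq: "p @ concat ps = q @ concat qs'"
      using Cons Cons.prems(3) by simp
    have "p = q"
      using indec_prefix_eq[OF _ _ eq] Cons.prems(1,2) Cons by simp
    moreover have "ps = qs'"
      using Cons.IH[of qs'] Cons.prems(1,2) Cons eq \<open>p = q\<close> by simp
    ultimately show ?thesis using Cons by simp
  qed
qed

lemma zero_height_is_boundary:
  "\<forall>p\<in>set ps. indec_dyck p \<Longrightarrow> height (take m (concat ps)) = 0 \<Longrightarrow> m \<le> length (concat ps)
   \<Longrightarrow> \<exists>i. m = length (concat (take i ps))"
proof (induction ps arbitrary: m)
  case Nil
  then show ?case by (intro exI[of _ 0]) simp
next
  case (Cons p ps)
  have p: "indec_dyck p" using Cons.prems by simp
  consider "m = 0" | "0 < m" "m < length p" | "length p \<le> m" by linarith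
  then show ?case
  proof cases
    case 1
    then show ?thesis by (intro exI[of _ 0]) simp
  next
    case 2
    then have "height (take m p) > 0" using p unfolding indec_dyck_def by auto
    then show ?thesis using Cons.prems 2 by simp
  next
    case 3
    have "height p = 0" using p by (simp add: indec_dyck_def dyck_def)
    then have "height (take (m - length p) (concat ps)) = 0"
      using Cons.prems 3 by (simp add: height_append)
    then obtain i where "m - length p = length (concat (take i ps))"
      using Cons.IH Cons.prems by fastforce
    then have "m = length (concat (take (Suc i) (p # ps)))" using 3 by simp
    then show ?thesis by blast
  qed
qed

lemma rotated_factorisation:
  assumes ps: "\<forall>p\<in>set ps. indec_dyck p" and qs: "\<forall>q\<in>set qs. indec_dyck q"
    and eq: "concat qs = rotate m (concat ps)"
  shows "\<exists>i. qs = rotate i ps"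
proof (cases "concat ps = []")
  case True
  then have "ps = []" "qs = []"
    using ps qs eq by (auto simp: indec_dyck_def)
  then show ?thesis by auto
next
  case False
  define u where "u = concat ps"
  define c where "c = m mod length u"
  have c_less: "c < length u" using False by (simp add: u_def c_def)
  have rot: "rotate m u = drop c u @ take c u"
    by (simp add: rotate_drop_take c_def)
  have "height (take c u) = 0"
    using dyck_rotation_cut dyck_concat[OF ps] dyck_concat[OF qs] eq rot u_def by metis
  then obtain i where i: "c = length (concat (take i ps))"
    using zero_height_is_boundary[OF ps, of c] c_less by (auto simp: u_def)
  have "i < length ps"
    using i c_less by (metis not_less take_all u_def less_irrefl)
  have "u = concat (take i ps) @ concat (drop i ps)"
    by (simp add: u_def flip: concat_append)
  then have "take c u = concat (take i ps)" "drop c u = concat (drop i ps)"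
    using i by simp_all
  then have "concat qs = concat (rotate i ps)"
    using eq rot \<open>i < length ps\<close> by (simp add: rotate_drop_take u_def)
  then show ?thesis
    using unique_factorisation[OF qs, of "rotate i ps"] ps by auto
qed

lemma first_return_indec:
  assumes w: "dyck w" and k: "0 < k" "k \<le> length w" "height (take k w) = 0"
    and first: "\<And>j. 0 < j \<Longrightarrow> j < k \<Longrightarrow> height (take j w) \<noteq> 0"
  shows "indec_dyck (take k w)" "dyck (drop k w)"
proof -
  have "0 \<le> height (take j (take k w))" for j
    using dyck_prefix[OF w, of "min j k"] by (simp add: min_def)
  moreover have "0 < height (take j (take k w))" if j: "0 < j" "j < length (take k w)" for j
  proof -
    have "height (take j w) \<noteq> 0" "height (take j w) \<ge> 0"
      using j first dyck_prefix[OF w] by auto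
    then show ?thesis using j by simp
  qed
  moreover have "take k w \<noteq> []" using k by auto
  ultimately show "indec_dyck (take k w)"
    using k(3) unfolding indec_dyck_def dyck_def by blast
  have "height (take k w) + height (drop k w) = 0"
    using dyck_height[OF w] by (metis append_take_drop_id height_append)
  moreover have "0 \<le> height (take j (drop k w))" for j
    using height_take_add[of k j w] dyck_prefix[OF w, of "k + j"] k by simp
  ultimately show "dyck (drop k w)"
    using k(3) unfolding dyck_def by simp
qed

lemma factorisation_exists:
  "dyck w \<Longrightarrow> \<exists>ps. (\<forall>p\<in>set ps. indec_dyck p) \<and> concat ps = w"
proof (induction "length w" arbitrary: w rule: less_induct)
  case less
  show ?case
  proof (cases "w = []")
    case True
    then show ?thesis by (intro exI[of _ "[]"]) simp
  next
    case False
    define P where "P = (\<lambda>k. 0 < k \<and> height (take k w) = 0)"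
    define k where "k = (LEAST k. P k)"
    have P_len: "P (length w)" using False less.prems by (simp add: P_def dyck_def)
    then have Pk: "P k" unfolding k_def by (rule LeastI)
    have "k \<le> length w" unfolding k_def by (rule Least_le[of P, OF P_len])
    moreover have "height (take j w) \<noteq> 0" if "0 < j" "j < k" for j
      using not_less_Least[of j P] that unfolding k_def P_def by blast
    ultimately have "indec_dyck (take k w)" "dyck (drop k w)"
      using first_return_indec[OF less.prems, of k] Pk unfolding P_def by blast+
    moreover have "length (drop k w) < length w" using Pk False by (simp add: P_def)
    ultimately obtain ps where "\<forall>p\<in>set ps. indec_dyck p" "concat ps = drop k w"
      using less.hyps by blast
    then show ?thesis using \<open>indec_dyck (take k w)\<close>
      by (intro exI[of _ "take k w # ps"]) simp
  qed
qed

section \<open>The cycle lemma\<close>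

text \<open>Every balanced word has a rotation that is a Dyck word: start it at a
  position where the height profile attains its minimum.\<close>
lemma balanced_rotation_dyck:
  assumes "count_list w True = count_list w False"
  shows "\<exists>k. dyck (rotate k w)"
proof -
  define f where "f = (\<lambda>j. height (take j w))"
  define lowest where "lowest = Min (f ` {..length w})"
  have "lowest \<in> f ` {..length w}" unfolding lowest_def by (rule Min_in) auto
  then obtain k where k: "k \<le> length w" "f k = lowest" by auto
  have min: "f k \<le> f j" if "j \<le> length w" for j
    using k that unfolding lowest_def by auto
  have "height w = 0" using assms by (simp add: height_def)
  then have h_drop: "height (drop k w) = - f k"
    unfolding f_def by (metis append_take_drop_id height_append add.commute add_eq_0_iff2)
  have "dyck (drop k w @ take k w)"
    unfolding dyck_def
  proof (intro conjI allI impI)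
    show "height (drop k w @ take k w) = 0" using h_drop by (simp add: height_append f_def)
    fix j
    show "0 \<le> height (take j (drop k w @ take k w))"
    proof (cases "j \<le> length w - k")
      case True
      have "f (k + j) = f k + height (take j (drop k w))"
        using height_take_add unfolding f_def by blast
      then show ?thesis using min[of "k + j"] True k by simp
    next
      case False
      then have "take j (drop k w @ take k w) = drop k w @ take (min (j - (length w - k)) k) w"
        by (simp add: min_def)
      then show ?thesis
        using min[of "min (j - (length w - k)) k"] k h_drop by (simp add: height_append f_def)
    qed
  qed
  moreover have "rotate k w = drop k w @ take k w"
    using rotate_append[of "take k w" "drop k w"] k(1) by simp
  ultimately show ?thesis by metis
qed

lemma cyc_to_necklace_inj: "inj_on cyc_to_necklace (cyc_seqs n)"
proof (rule inj_onI)
  fix C D assume "C \<in> cyc_seqs n" "D \<in> cyc_seqs n"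
  then obtain ps qs where ps: "\<forall>p\<in>set ps. indec_dyck p" "C = rot_class ps"
    and qs: "\<forall>q\<in>set qs. indec_dyck q" "D = rot_class qs"
    unfolding cyc_seqs_def by blast
  assume "cyc_to_necklace C = cyc_to_necklace D"
  then have "concat qs \<in> rot_class (concat ps)"
    using ps(2) qs(2) rot_class_self[of "concat qs"] by (simp add: cyc_to_necklace_rot_class)
  then obtain m where "concat qs = rotate m (concat ps)"
    unfolding rot_class_def by blast
  then obtain i where "qs = rotate i ps"
    using rotated_factorisation ps(1) qs(1) by blast
  then show "C = D" using ps(2) qs(2) by (simp add: rot_class_rotate)
qed

lemma cyc_to_necklace_image:
  assumes "n \<ge> 1"
  shows "cyc_to_necklace ` cyc_seqs n = balanced_necklaces n"
proof
  show "cyc_to_necklace ` cyc_seqs n \<subseteq> balanced_necklaces n"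
  proof
    fix N assume "N \<in> cyc_to_necklace ` cyc_seqs n"
    then obtain ps where ps: "\<forall>p\<in>set ps. indec_dyck p" "length (concat ps) = 2 * n"
      and N: "N = rot_class (concat ps)"
      unfolding cyc_seqs_def by (auto simp: cyc_to_necklace_rot_class)
    then show "N \<in> balanced_necklaces n"
      using dyck_balanced[OF dyck_concat[OF ps(1)]] unfolding balanced_necklaces_def by blast
  qed
  show "balanced_necklaces n \<subseteq> cyc_to_necklace ` cyc_seqs n"
  proof
    fix N assume "N \<in> balanced_necklaces n"
    then obtain w where w: "length w = 2 * n" "count_list w True = count_list w False"
      and N: "N = rot_class w"
      unfolding balanced_necklaces_def by blast
    obtain k where "dyck (rotate k w)" using balanced_rotation_dyck[OF w(2)] by blast
    then obtain ps where ps: "\<forall>p\<in>set ps. indec_dyck p" "concat ps = rotate k w"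
      using factorisation_exists by blast
    have "length (concat ps) = 2 * n" using ps(2) w(1) by simp
    moreover have "ps \<noteq> []" using calculation assms by auto
    ultimately have "rot_class ps \<in> cyc_seqs n"
      using ps(1) unfolding cyc_seqs_def by blast
    moreover have "cyc_to_necklace (rot_class ps) = N"
      using ps(2) N by (simp add: cyc_to_necklace_rot_class rot_class_rotate)
    ultimately show "N \<in> cyc_to_necklace ` cyc_seqs n" by blast
  qed
qed

theorem mainTheorem2:
  fixes n :: nat
  assumes "n \<ge> 1"
  shows "(\<forall>C\<in>cyc_seqs n. \<exists>N. (\<lambda>ps. rot_class (concat ps)) ` C = {N})
         \<and> bij_betw cyc_to_necklace (cyc_seqs n) (balanced_necklaces n)"
proof
  show "\<forall>C\<in>cyc_seqs n. \<exists>N. (\<lambda>ps. rot_class (concat ps)) ` C = {N}"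
    unfolding cyc_seqs_def using image_rot_class by blast
  show "bij_betw cyc_to_necklace (cyc_seqs n) (balanced_necklaces n)"
    unfolding bij_betw_def
    using cyc_to_necklace_inj cyc_to_necklace_image[OF assms] by blast
qed

end
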